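(* Fix $\epsilon\in(0,1)$. For a permutation of $[n]$ ($n$ even) chosen uniformly among those with all cycle lengths even, and even $k$, the expected number $\mathbb{E}_e^{(n)}Y_k$ of elements in $k$-cycles satisfies, uniformly, \[ \mathbb{E}_e^{(n)}Y_k\to\left(1-\frac kn\right)^{-1/2} \] as $k,n\to\infty$ with $0<k/n<1-\epsilon$; that is, $\mathbb{E}_e^{(n)}Y_k=\left(1-\frac kn\right)^{-1/2}(1+O(n^{-1}))$ with the implied constant uniform over such $k,n$.
   Context: $\mathbb{E}_e^{(n)}$ denotes expectation under the uniform measure on permutations of $[n]$ with all cycle lengths even. $Y_k=kX_k$, where $X_k$ is the number of $k$-cycles. *)

theory Defs
  imports Complex_Main "HOL-Combinatorics.Permutations" "HOL-Combinatorics.Orbits"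
begin

definition even_cycle_perms :: "nat \<Rightarrow> (nat \<Rightarrow> nat) set" where
  "even_cycle_perms n =
     {p. p permutes {1..n} \<and> (\<forall>x\<in>{1..n}. even (card (orbit p x)))}"

definition num_cycles :: "nat \<Rightarrow> nat \<Rightarrow> (nat \<Rightarrow> nat) \<Rightarrow> nat" where
  "num_cycles n k p = card {orbit p x | x. x \<in> {1..n} \<and> card (orbit p x) = k}"

definition Y :: "nat \<Rightarrow> nat \<Rightarrow> (nat \<Rightarrow> nat) \<Rightarrow> nat" where
  "Y n k p = k * num_cycles n k p"

definition E_even :: "nat \<Rightarrow> ((nat \<Rightarrow> nat) \<Rightarrow> real) \<Rightarrow> real" where
  "E_even n f = (\<Sum>p\<in>even_cycle_perms n. f p) / real (card (even_cycle_perms n))"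

end

theory Submission
  imports Defs "HOL-Combinatorics.Cycles"
begin

text \<open>Cutting a permutation along the cycle through a fixed point shows that the number e(n) of
  permutations of an n-set with all cycles even satisfies
  e(n) = Sum over even k of (n-1)(n-2)...(n-k+1) e(n-k), which is solved by e(n+2) = (n+1)^2 e(n).
  Counting pairs (p, x) with x on a k-cycle of p gives E Y_k = n(n-1)...(n-k+1) e(n-k) / e(n);
  for n = 2(L+j) and k = 2j this is the Wallis-type product W = Prod over i < j of
  (2L+2i+2)/(2L+2i+1). By induction on j, (2L+2j+1)/(2L+1) <= W^2 <= (L+j)/L = (1 - k/n)^(-1),
  and the two bounds differ by j/(L(2L+1)), which is at most (L+j)/L / (epsilon n)
  when k/n < 1 - epsilon.\<close>

fun even_cycle_count :: "nat \<Rightarrow> nat" where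
  "even_cycle_count 0 = 1"
| "even_cycle_count (Suc 0) = 0"
| "even_cycle_count (Suc (Suc n)) = (Suc n)^2 * even_cycle_count n"

lemma even_cycle_count_pos: "even n \<Longrightarrow> even_cycle_count n > 0"
  by (induction n rule: even_cycle_count.induct) auto

lemma even_cycle_count_recurrence:
  "n \<ge> 1 \<Longrightarrow>
   (\<Sum>k | k \<in> {1..n} \<and> even k. \<Prod>{n-k+1..n-1} * even_cycle_count (n-k)) = even_cycle_count n"
proof (induction n rule: even_cycle_count.induct)
  case (3 n)
  let ?f = "\<lambda>n k. \<Prod>{n-k+1..n-1} * even_cycle_count (n-k)"
  have evens: "{k. k \<in> {1..n+2} \<and> even k} = insert 2 ((\<lambda>k. k+2) ` {k. k \<in> {1..n} \<and> even k})"
    by (auto simp: image_iff elim!: evenE intro!: exI[where x="_ - 2"]) presburger+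
  have shift: "?f (n+2) (k+2) = n*(n+1) * ?f n k" if k: "k \<in> {1..n}" for k
  proof -
    obtain m where m: "n = Suc m" using k by (cases n) auto
    have "\<Prod>{n-k+1..n+1} = \<Prod>{n-k+1..n-1} * n * (n+1)"
      using k by (auto simp: m prod.cl_ivl_Suc)
    then show ?thesis by (simp add: algebra_simps del: prod.cl_ivl_Suc)
  qed
  have "(\<Sum>k | k \<in> {1..n+2} \<and> even k. ?f (n+2) k)
      = ?f (n+2) 2 + (\<Sum>k | k \<in> {1..n} \<and> even k. ?f (n+2) (k+2))"
    unfolding evens by (subst sum.insert) (auto simp: sum.reindex inj_on_def simp del: prod.cl_ivl_Suc)
  also have "(\<Sum>k | k \<in> {1..n} \<and> even k. ?f (n+2) (k+2))
      = (\<Sum>k | k \<in> {1..n} \<and> even k. n*(n+1) * ?f n k)"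
    using shift by (intro sum.cong refl) blast
  also have "?f (n+2) 2 + (\<Sum>k | k \<in> {1..n} \<and> even k. n*(n+1) * ?f n k)
      = (n+1) * even_cycle_count n + n*(n+1) * (\<Sum>k | k \<in> {1..n} \<and> even k. ?f n k)"
    by (simp add: sum_distrib_left)
  also have "n*(n+1) * (\<Sum>k | k \<in> {1..n} \<and> even k. ?f n k) = n*(n+1) * even_cycle_count n"
    using "3.IH" by (cases n) auto
  finally have "(\<Sum>k | k \<in> {1..n+2} \<and> even k. ?f (n+2) k) = even_cycle_count (n+2)"
    by (simp add: power2_eq_square algebra_simps)
  then show ?case by (simp only: add_2_eq_Suc')
qed auto

definition even_cycle_perms_on :: "'a set \<Rightarrow> ('a \<Rightarrow> 'a) set" where
  "even_cycle_perms_on A = {p. p permutes A \<and> (\<forall>x\<in>A. even (card (orbit p x)))}"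

definition even_cycle_perms_at :: "'a set \<Rightarrow> 'a \<Rightarrow> nat \<Rightarrow> ('a \<Rightarrow> 'a) set" where
  "even_cycle_perms_at A x k = {p \<in> even_cycle_perms_on A. card (orbit p x) = k}"

lemma even_cycle_perms_eq_on: "even_cycle_perms n = even_cycle_perms_on {1..n}"
  by (simp add: even_cycle_perms_def even_cycle_perms_on_def)

lemma finite_even_cycle_perms_on: "finite A \<Longrightarrow> finite (even_cycle_perms_on A)"
  by (rule finite_subset[OF _ finite_permutations]) (auto simp: even_cycle_perms_on_def)

lemma set_support: "permutation p \<Longrightarrow> set (support p x) = orbit p x"
  by (metis support_set orbit_altdef_permutation full_SetCompr_eq)

lemma length_support: "permutation p \<Longrightarrow> length (support p x) = card (orbit p x)"
  by (metis cycle_of_permutation distinct_card set_support)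

lemma support_Cons: "permutation p \<Longrightarrow> support p x = x # tl (support p x)"
  using least_power_of_permutation(2)[of p x] by (simp add: upt_conv_Cons)

lemma funpow_cycle_of_list:
  assumes "distinct (x#xs)"
  shows "(cycle_of_list (x#xs) ^^ n) x = (x#xs) ! (n mod length (x#xs))"
proof -
  have "map (cycle_of_list (x#xs) ^^ n) (x#xs) ! 0 = rotate n (x#xs) ! 0"
    using cyclic_rotation[OF assms, of n] by simp
  then show ?thesis by (simp add: nth_rotate)
qed

lemma support_cycle_of_list:
  assumes "distinct (x#xs)"
  shows "support (cycle_of_list (x#xs)) x = x#xs"
proof -
  let ?c = "cycle_of_list (x#xs)" and ?m = "length (x#xs)"
  have pow: "(?c ^^ n) x = (x#xs) ! (n mod ?m)" for n
    using funpow_cycle_of_list[OF assms] .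
  have "(?c ^^ ?m) x = x"
    using pow[of ?m] by (simp only: mod_self nth_Cons_0)
  then have "least_power ?c x \<le> ?m"
    by (rule least_power_le) simp
  moreover have "least_power ?c x mod ?m = 0"
  proof -
    have "(x#xs) ! (least_power ?c x mod ?m) = (x#xs) ! 0"
      using least_power_of_permutation(1)[OF permutation_of_cycle, of "x#xs" x] by (simp only: pow) simp
    then show ?thesis
      by (subst (asm) nth_eq_iff_index_eq[OF assms]) auto
  qed
  moreover have "least_power ?c x > 0"
    by (rule least_power_of_permutation(2)[OF permutation_of_cycle])
  ultimately have lp: "least_power ?c x = ?m"
    by (metis le_neq_implies_less mod_less neq0_conv)
  show ?thesis
  proof (rule nth_equalityI)
    show "length (support ?c x) = ?m"
      by (simp only: lp length_map length_upt diff_zero)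
    fix i assume "i < length (support ?c x)"
    then show "support ?c x ! i = (x#xs) ! i"
      by (simp only: lp length_map length_upt diff_zero nth_map nth_upt pow add_0 mod_less)
  qed
qed

lemma support_cong: "(\<And>n. (p ^^ n) x = (q ^^ n) x) \<Longrightarrow> support p x = support q x"
  by (simp add: least_power_def)

lemma funpow_cong_invariant:
  assumes "f \<in> A \<rightarrow> A" "\<And>y. y \<in> A \<Longrightarrow> f y = g y" "x \<in> A"
  shows "(f ^^ n) x = (g ^^ n) x"
proof -
  have "(f ^^ n) x = (g ^^ n) x \<and> (f ^^ n) x \<in> A"
    by (induction n) (use assms in auto)
  then show ?thesis ..
qed

lemma
  fixes x :: 'a and xs :: "'a list" and q :: "'a \<Rightarrow> 'a"
  defines "p \<equiv> cycle_of_list (x#xs) \<circ> q"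
  assumes dist: "distinct (x#xs)" and q: "q permutes B" and disj: "set (x#xs) \<inter> B = {}"
  shows permutes_cycle_comp: "p permutes (set (x#xs) \<union> B)"
    and support_cycle_comp: "support p x = x#xs"
    and orbit_cycle_comp: "orbit p x = set (x#xs)"
    and orbit_cycle_comp_outside: "y \<in> B \<Longrightarrow> orbit p y = orbit q y"
    and perm_restrict_cycle_comp: "perm_restrict p B = q"
proof -
  let ?c = "cycle_of_list (x#xs)"
  have c: "?c permutes set (x#xs)" by (rule cycle_permutes)
  have on_cycle: "p y = ?c y" if "y \<in> set (x#xs)" for y
    using that disj by (metis p_def comp_apply disjoint_iff permutes_not_in[OF q])
  have on_B: "p y = q y" if "y \<in> B" for y
    using that disj permutes_in_image[OF q] by (metis p_def comp_apply disjoint_iff id_outside_supp)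
  have c_closed: "?c \<in> set (x#xs) \<rightarrow> set (x#xs)" and q_closed: "q \<in> B \<rightarrow> B"
    using permutes_in_image[OF c] permutes_in_image[OF q] by auto
  show "p permutes (set (x#xs) \<union> B)"
    unfolding p_def by (rule permutes_compose[OF permutes_subset[OF q] permutes_subset[OF c]]) auto
  have "support ?c x = support p x"
    by (rule support_cong, rule funpow_cong_invariant[OF c_closed]) (simp_all add: on_cycle)
  then show "support p x = x#xs"
    using support_cycle_of_list[OF dist] by simp
  have "orbit p x = orbit ?c x"
    by (rule orbit_cong0[OF _ c_closed, symmetric]) (simp_all add: on_cycle)
  also have "\<dots> = set (x#xs)"
    using set_support[OF permutation_of_cycle, of "x#xs" x] support_cycle_of_list[OF dist] by simp
  finally show "orbit p x = set (x#xs)" .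
  show "orbit p y = orbit q y" if "y \<in> B"
    by (rule orbit_cong0[OF that q_closed, symmetric]) (simp add: on_B)
  show "perm_restrict p B = q"
    using on_B permutes_not_in[OF q] by (auto simp: perm_restrict_def)
qed

lemma
  assumes p: "p permutes A" and A: "finite A"
  shows permutes_perm_restrict_orbit: "perm_restrict p (A - orbit p x) permutes (A - orbit p x)"
    and orbit_perm_restrict_orbit:
      "y \<in> A - orbit p x \<Longrightarrow> orbit (perm_restrict p (A - orbit p x)) y = orbit p y"
proof -
  show r: "perm_restrict p (A - orbit p x) permutes (A - orbit p x)"
    by (rule perm_restrict_diff_cyclic[OF p cyclic_on_orbit[OF p A]])
  show "orbit (perm_restrict p (A - orbit p x)) y = orbit p y" if "y \<in> A - orbit p x"
    by (rule orbit_cong0[OF that]) (use permutes_in_image[OF r] in \<open>auto simp: perm_restrict_simps\<close>)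
qed

lemma permutes_eq_cycle_comp_restrict:
  assumes p: "p permutes A" and A: "finite A" and x: "x \<in> A"
  shows "p = cycle_of_list (support p x) \<circ> perm_restrict p (A - orbit p x)"
proof
  fix y
  have perm: "permutation p" using p A by (auto simp: permutation_permutes)
  show "p y = (cycle_of_list (support p x) \<circ> perm_restrict p (A - orbit p x)) y"
  proof (cases "y \<in> orbit p x")
    case True
    then show ?thesis
      using cycle_restrict[OF perm] set_support[OF perm] by (simp add: perm_restrict_simps)
  next
    case False
    have "perm_restrict p (A - orbit p x) y \<notin> orbit p x"
      using False permutes_in_image[OF permutes_perm_restrict_orbit[OF p A, of x], of y]
      by (cases "y \<in> A") (auto simp: perm_restrict_simps)
    then have "cycle_of_list (support p x) (perm_restrict p (A - orbit p x) y)
        = perm_restrict p (A - orbit p x) y"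
      by (metis id_outside_supp set_support[OF perm])
    then show ?thesis
      using False permutes_not_in[OF p] by (auto simp: perm_restrict_def)
  qed
qed

text \<open>The cycle through x, listed from x onwards, is cut off; what remains is a permutation
  of the other points.\<close>

lemma bij_betw_even_cycle_perms_at:
  assumes A: "finite A" and x: "x \<in> A" and k: "even k" "0 < k"
  shows "bij_betw (\<lambda>p. (tl (support p x), perm_restrict p (A - orbit p x)))
           (even_cycle_perms_at A x k)
           (SIGMA xs:{xs. length xs = k - 1 \<and> distinct xs \<and> set xs \<subseteq> A - {x}}.
              even_cycle_perms_on (A - set (x#xs)))"
    (is "bij_betw ?cut _ ?Sig")
proof -
  have cut: "?cut p \<in> ?Sig \<and> cycle_of_list (x # tl (support p x)) \<circ> perm_restrict p (A - orbit p x) = p"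
    if p: "p \<in> even_cycle_perms_at A x k" for p
  proof -
    have pA: "p permutes A" and even: "\<forall>y\<in>A. even (card (orbit p y))"
      and len: "card (orbit p x) = k"
      using p by (auto simp: even_cycle_perms_at_def even_cycle_perms_on_def)
    have perm: "permutation p" using pA A by (auto simp: permutation_permutes)
    have supp: "x # tl (support p x) = support p x" by (rule support_Cons[OF perm, symmetric])
    have set_supp: "set (x # tl (support p x)) = orbit p x"
      unfolding supp by (rule set_support[OF perm])
    have "distinct (x # tl (support p x))"
      unfolding supp by (rule cycle_of_permutation[OF perm])
    moreover have "length (tl (support p x)) = k - 1"
      using length_support[OF perm] len by simp
    moreover have "set (tl (support p x)) \<subseteq> A - {x}"
      using set_supp \<open>distinct (x # _)\<close> permutes_orbit_subset[OF pA x] by auto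
    moreover have "perm_restrict p (A - orbit p x) \<in> even_cycle_perms_on (A - set (x # tl (support p x)))"
      unfolding set_supp even_cycle_perms_on_def
      using permutes_perm_restrict_orbit[OF pA A] orbit_perm_restrict_orbit[OF pA A] even by auto
    ultimately have "?cut p \<in> ?Sig" by simp
    moreover have "cycle_of_list (x # tl (support p x)) \<circ> perm_restrict p (A - orbit p x) = p"
      unfolding supp by (rule permutes_eq_cycle_comp_restrict[OF pA A x, symmetric])
    ultimately show ?thesis ..
  qed
  have glue: "cycle_of_list (x#xs) \<circ> q \<in> even_cycle_perms_at A x k
      \<and> ?cut (cycle_of_list (x#xs) \<circ> q) = (xs, q)"
    if s: "(xs, q) \<in> ?Sig" for xs q
  proof -
    let ?p = "cycle_of_list (x#xs) \<circ> q"
    have dist: "distinct (x#xs)" and len: "length xs = k - 1" and xsA: "set xs \<subseteq> A"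
      using s by auto
    have qB: "q permutes A - set (x#xs)" and even: "\<forall>y\<in>A - set (x#xs). even (card (orbit q y))"
      using s by (auto simp: even_cycle_perms_on_def)
    have disj: "set (x#xs) \<inter> (A - set (x#xs)) = {}" by blast
    note props = permutes_cycle_comp[OF dist qB disj] support_cycle_comp[OF dist qB disj]
      orbit_cycle_comp[OF dist qB disj] orbit_cycle_comp_outside[OF dist qB disj]
      perm_restrict_cycle_comp[OF dist qB disj]
    have "set (x#xs) \<union> (A - set (x#xs)) = A" using xsA x by auto
    then have pA: "?p permutes A" using props(1) by simp
    have card_orb: "card (orbit ?p x) = k"
      using props(3) distinct_card[OF dist] len k by simp
    have "even (card (orbit ?p y))" if y: "y \<in> A" for y
    proof (cases "y \<in> set (x#xs)")
      case True
      then have "orbit ?p y = orbit ?p x"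
        using props(3) cyclic_on_orbit[OF pA A] by (metis orbit_cyclic_eq3)
      then show ?thesis using card_orb k by simp
    next
      case False
      then show ?thesis using props(4) even y by simp
    qed
    then have "?p \<in> even_cycle_perms_at A x k"
      using pA card_orb by (simp add: even_cycle_perms_at_def even_cycle_perms_on_def)
    moreover have "?cut ?p = (xs, q)"
      using props(2,3,5) by simp
    ultimately show ?thesis ..
  qed
  show ?thesis
    by (rule bij_betw_byWitness[where f' = "\<lambda>(xs, q). cycle_of_list (x#xs) \<circ> q"])
      (use cut glue in fastforce)+
qed

lemma card_even_cycle_perms_at:
  fixes A :: "'a set"
  assumes A: "finite A" and x: "x \<in> A" and k: "even k" "0 < k" "k \<le> card A"
    and rest: "\<And>B :: 'a set. finite B \<Longrightarrow> card B = card A - k \<Longrightarrow> card (even_cycle_perms_on B) = c"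
  shows "card (even_cycle_perms_at A x k) = \<Prod>{card A - k + 1..card A - 1} * c"
proof -
  let ?Lists = "{xs. length xs = k - 1 \<and> distinct xs \<and> set xs \<subseteq> A - {x}}"
  have fin_Lists: "finite ?Lists"
    by (rule finite_subset[OF _ finite_lists_length_eq[OF A, of "k - 1"]]) auto
  have "card (even_cycle_perms_at A x k)
      = card (SIGMA xs:?Lists. even_cycle_perms_on (A - set (x#xs)))"
    by (rule bij_betw_same_card[OF bij_betw_even_cycle_perms_at[OF A x k(1,2)]])
  also have "\<dots> = (\<Sum>xs\<in>?Lists. card (even_cycle_perms_on (A - set (x#xs))))"
    using fin_Lists A by (simp add: finite_even_cycle_perms_on)
  also have "\<dots> = (\<Sum>xs\<in>?Lists. c)"
  proof (rule sum.cong)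
    fix xs assume xs: "xs \<in> ?Lists"
    then have dist: "distinct (x#xs)" and len: "length (x#xs) = k" and "set (x#xs) \<subseteq> A"
      using x k(2) by auto
    moreover have "card (set (x#xs)) = k"
      using distinct_card[OF dist] len by simp
    ultimately have "card (A - set (x#xs)) = card A - k"
      by (simp add: card_Diff_subset A finite_subset)
    then show "card (even_cycle_perms_on (A - set (x#xs))) = c"
      using rest A by simp
  qed simp
  also have "\<dots> = card ?Lists * c" by simp
  also have "card ?Lists = \<Prod>{card A - k + 1..card A - 1}"
    using card_lists_distinct_length_eq[of "A - {x}" "k - 1"] A x k by simp
  finally show ?thesis by simp
qed

lemma card_even_cycle_perms_on:
  "finite A \<Longrightarrow> card (even_cycle_perms_on A) = even_cycle_count (card A)"
proof (induction "card A" arbitrary: A rule: less_induct)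
  case less
  show ?case
  proof (cases "A = {}")
    case True
    then have "even_cycle_perms_on A = {id}"
      by (auto simp: even_cycle_perms_on_def permutes_empty)
    then show ?thesis using True by simp
  next
    case False
    then obtain x where x: "x \<in> A" by blast
    let ?n = "card A" and ?K = "{k. k \<in> {1..card A} \<and> even k}"
    have decomp: "even_cycle_perms_on A = (\<Union>k\<in>?K. even_cycle_perms_at A x k)"
    proof (intro equalityI subsetI)
      fix p assume p: "p \<in> even_cycle_perms_on A"
      then have pA: "p permutes A" by (simp add: even_cycle_perms_on_def)
      have "orbit p x \<subseteq> A" by (rule permutes_orbit_subset[OF pA x])
      moreover have "x \<in> orbit p x"
        using pA less.prems by (metis permutation_permutes permutation_self_in_orbit)
      ultimately have "card (orbit p x) \<in> {1..card A}"
        using less.prems by (auto simp: card_mono Suc_le_eq card_gt_0_iff finite_subset)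
      then show "p \<in> (\<Union>k\<in>?K. even_cycle_perms_at A x k)"
        using p x by (auto simp: even_cycle_perms_at_def even_cycle_perms_on_def)
    qed (auto simp: even_cycle_perms_at_def)
    have "card (even_cycle_perms_on A) = (\<Sum>k\<in>?K. card (even_cycle_perms_at A x k))"
      unfolding decomp
      by (rule card_UN_disjoint) (auto simp: even_cycle_perms_at_def finite_even_cycle_perms_on less.prems)
    also have "\<dots> = (\<Sum>k\<in>?K. \<Prod>{?n - k + 1..?n - 1} * even_cycle_count (?n - k))"
    proof (rule sum.cong)
      fix k assume k: "k \<in> ?K"
      show "card (even_cycle_perms_at A x k) = \<Prod>{?n - k + 1..?n - 1} * even_cycle_count (?n - k)"
      proof (rule card_even_cycle_perms_at[OF less.prems x])
        show "even k" "0 < k" "k \<le> ?n" using k by auto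
        fix B :: "'a set" assume "finite B" "card B = ?n - k"
        then show "card (even_cycle_perms_on B) = even_cycle_count (?n - k)"
          using less.hyps[of B] k by auto
      qed
    qed simp
    also have "\<dots> = even_cycle_count ?n"
      using False less.prems by (intro even_cycle_count_recurrence) (simp add: Suc_le_eq card_gt_0_iff)
    finally show ?thesis .
  qed
qed

lemma card_points_in_cycles:
  assumes p: "p permutes A" and A: "finite A"
  shows "card {x\<in>A. card (orbit p x) = k} = k * card {orbit p x | x. x \<in> A \<and> card (orbit p x) = k}"
proof -
  let ?C = "{orbit p x | x. x \<in> A \<and> card (orbit p x) = k}"
  have same_orbit: "orbit p y = orbit p x" if "y \<in> orbit p x" for x y
    using orbit_cyclic_eq3[OF cyclic_on_orbit[OF p A] that] .
  have perm: "permutation p" using p A by (auto simp: permutation_permutes)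
  have "{x\<in>A. card (orbit p x) = k} = \<Union>?C"
  proof (intro equalityI subsetI)
    fix y assume "y \<in> {x\<in>A. card (orbit p x) = k}"
    then show "y \<in> \<Union>?C" using permutation_self_in_orbit[OF perm, of y] by blast
  next
    fix y assume "y \<in> \<Union>?C"
    then obtain x where x: "x \<in> A" "card (orbit p x) = k" and y: "y \<in> orbit p x" by auto
    then show "y \<in> {x\<in>A. card (orbit p x) = k}"
      using permutes_orbit_subset[OF p x(1)] same_orbit[OF y] by auto
  qed
  moreover have "card (\<Union>?C) = sum card ?C"
  proof (rule card_Union_disjoint)
    show "pairwise disjnt ?C"
      unfolding pairwise_def disjnt_def using same_orbit by blast
    show "finite c" if "c \<in> ?C" for c
      using that permutes_orbit_subset[OF p] A by (auto intro: finite_subset)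
  qed
  moreover have "sum card ?C = (\<Sum>c\<in>?C. k)" by (rule sum.cong) auto
  ultimately show ?thesis by (simp add: mult.commute)
qed

lemma Y_eq_card: "p permutes {1..n} \<Longrightarrow> Y n k p = card {x\<in>{1..n}. card (orbit p x) = k}"
  unfolding Y_def num_cycles_def by (rule card_points_in_cycles[symmetric]) simp_all

lemma sum_card_points_in_cycles:
  assumes "finite A"
  shows "(\<Sum>p\<in>even_cycle_perms_on A. card {x\<in>A. card (orbit p x) = k})
       = (\<Sum>x\<in>A. card (even_cycle_perms_at A x k))"
proof -
  have card_sum: "card {y\<in>Y. P y} = (\<Sum>y\<in>Y. of_bool (P y))" if "finite Y" for Y and P :: "'b \<Rightarrow> bool"
    using that by (simp add: Collect_conj_eq)
  have "(\<Sum>p\<in>even_cycle_perms_on A. card {x\<in>A. card (orbit p x) = k})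
      = (\<Sum>p\<in>even_cycle_perms_on A. \<Sum>x\<in>A. of_bool (card (orbit p x) = k))"
    using assms by (simp add: card_sum)
  also have "\<dots> = (\<Sum>x\<in>A. \<Sum>p\<in>even_cycle_perms_on A. of_bool (card (orbit p x) = k))"
    by (rule sum.swap)
  also have "\<dots> = (\<Sum>x\<in>A. card (even_cycle_perms_at A x k))"
    using finite_even_cycle_perms_on[OF assms] by (simp add: card_sum even_cycle_perms_at_def)
  finally show ?thesis .
qed

lemma E_even_Y:
  assumes k: "0 < k" "k \<le> n" "even k"
  shows "E_even n (\<lambda>p. real (Y n k p))
       = real (\<Prod>{n-k+1..n}) * even_cycle_count (n-k) / even_cycle_count n"
proof -
  let ?A = "{1..n}"
  have "(\<Sum>p\<in>even_cycle_perms n. Y n k p) = (\<Sum>x\<in>?A. card (even_cycle_perms_at ?A x k))"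
    using sum_card_points_in_cycles[of ?A k]
    by (simp add: even_cycle_perms_eq_on Y_eq_card even_cycle_perms_on_def)
  also have "\<dots> = (\<Sum>x\<in>?A. \<Prod>{n-k+1..n-1} * even_cycle_count (n-k))"
  proof (rule sum.cong)
    fix x assume x: "x \<in> ?A"
    show "card (even_cycle_perms_at ?A x k) = \<Prod>{n-k+1..n-1} * even_cycle_count (n-k)"
      using card_even_cycle_perms_at[OF _ x k(3,1), of "even_cycle_count (n-k)"] k
      by (simp add: card_even_cycle_perms_on)
  qed simp
  also have "\<dots> = \<Prod>{n-k+1..n} * even_cycle_count (n-k)"
  proof -
    obtain m where m: "n = Suc m" using k by (cases n) auto
    have "n * \<Prod>{n-k+1..n-1} = \<Prod>{n-k+1..n}"
      using k by (auto simp: m prod.cl_ivl_Suc)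
    then show ?thesis by simp
  qed
  finally show ?thesis
    unfolding E_even_def even_cycle_perms_eq_on
    by (simp add: card_even_cycle_perms_on flip: of_nat_sum)
qed

definition wallis_ratio :: "real \<Rightarrow> nat \<Rightarrow> real" where
  "wallis_ratio L j = (\<Prod>i<j. (2*(L + real i) + 2) / (2*(L + real i) + 1))"

lemma wallis_ratio_Suc:
  "wallis_ratio L (Suc j) = wallis_ratio L j * ((2*(L+j)+2) / (2*(L+j)+1))"
  by (simp add: wallis_ratio_def)

lemma wallis_ratio_nonneg: "L \<ge> 0 \<Longrightarrow> wallis_ratio L j \<ge> 0"
  by (simp add: wallis_ratio_def prod_nonneg)

lemma wallis_ratio_sq_lower:
  assumes "L > 0"
  shows "(2*(L+j)+1) / (2*L+1) \<le> (wallis_ratio L j)^2"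
proof (induction j)
  case 0
  then show ?case using assms by (simp add: wallis_ratio_def)
next
  case (Suc j)
  define a where "a = L + j"
  have a: "a > 0" using assms by (simp add: a_def)
  have "(2*(L + Suc j)+1) / (2*L+1) = (2*a+3) / (2*L+1)"
    by (simp add: a_def algebra_simps)
  also have "\<dots> \<le> (2*a+2)^2 / (2*a+1) / (2*L+1)"
  proof -
    have "2*a+3 \<le> (2*a+2)^2 / (2*a+1)"
      using a by (simp add: le_divide_eq power2_eq_square algebra_simps)
    then show ?thesis by (rule divide_right_mono) (use assms in simp)
  qed
  also have "\<dots> = (2*a+1) / (2*L+1) * ((2*a+2) / (2*a+1))^2"
    using a by (simp add: power2_eq_square)
  also have "\<dots> \<le> (wallis_ratio L j)^2 * ((2*a+2) / (2*a+1))^2"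
    using Suc.IH by (intro mult_right_mono) (simp_all add: a_def)
  also have "\<dots> = (wallis_ratio L (Suc j))^2"
    by (simp only: wallis_ratio_Suc a_def power_mult_distrib)
  finally show ?case .
qed

lemma wallis_ratio_sq_upper:
  assumes "L > 0"
  shows "(wallis_ratio L j)^2 \<le> (L+j) / L"
proof (induction j)
  case 0
  then show ?case using assms by (simp add: wallis_ratio_def)
next
  case (Suc j)
  define a where "a = L + j"
  have a: "a > 0" using assms by (simp add: a_def)
  have "(wallis_ratio L (Suc j))^2 = (wallis_ratio L j)^2 * ((2*a+2) / (2*a+1))^2"
    by (simp only: wallis_ratio_Suc a_def power_mult_distrib)
  also have "\<dots> \<le> a / L * ((2*a+2) / (2*a+1))^2"
    using Suc.IH by (intro mult_right_mono) (simp_all add: a_def)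
  also have "\<dots> = a * (2*a+2)^2 / (2*a+1)^2 / L"
    by (simp add: power_divide)
  also have "\<dots> \<le> (a+1) / L"
  proof (rule divide_right_mono)
    have "(a+1) * (2*a+1)^2 - a * (2*a+2)^2 = a + 1"
      by (simp add: power2_eq_square algebra_simps)
    then have "a * (2*a+2)^2 \<le> (a+1) * (2*a+1)^2" using a by linarith
    moreover have "(2*a+1)^2 > 0" using a by simp
    ultimately show "a * (2*a+2)^2 / (2*a+1)^2 \<le> a+1"
      by (simp add: divide_le_eq)
  qed (use assms in simp)
  also have "\<dots> = (L + Suc j) / L" by (simp add: a_def algebra_simps)
  finally show ?case .
qed

lemma abs_diff_le_diff_squares:
  fixes v s :: real
  assumes "0 \<le> v" "0 < s" "v^2 \<le> s^2"
  shows "\<bar>v - s\<bar> \<le> (s^2 - v^2) / s"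
proof -
  have "v \<le> s" using assms by (auto intro: power2_le_imp_le)
  then have "(s - v) * s \<le> (s - v) * (s + v)"
    using assms(1) by (intro mult_left_mono) auto
  also have "\<dots> = s^2 - v^2" by (simp add: power2_eq_square algebra_simps)
  finally show ?thesis
    using \<open>v \<le> s\<close> assms(2) by (simp add: le_divide_eq)
qed

lemma wallis_ratio_approx:
  fixes L \<epsilon> :: real
  assumes L: "L > 0" and \<epsilon>: "\<epsilon> > 0" and small: "\<epsilon> * j \<le> L"
  shows "\<bar>wallis_ratio L j - sqrt ((L+j)/L)\<bar> \<le> sqrt ((L+j)/L) / (\<epsilon> * (2*(L+j)))"
proof -
  define s where "s = sqrt ((L+j)/L)"
  have s: "s > 0" and s2: "s^2 = (L+j)/L" using L by (simp_all add: s_def)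
  have "\<bar>wallis_ratio L j - s\<bar> \<le> (s^2 - (wallis_ratio L j)^2) / s"
    using wallis_ratio_nonneg wallis_ratio_sq_upper L s s2
    by (intro abs_diff_le_diff_squares) (simp_all add: less_imp_le)
  also have "\<dots> \<le> ((L+j)/L - (2*(L+j)+1)/(2*L+1)) / s"
    using wallis_ratio_sq_lower[OF L, of j] s s2 by (simp add: divide_right_mono)
  also have "\<dots> = j / (L * (2*L+1)) / s"
    using L by (simp add: field_simps)
  also have "\<dots> = j * s / ((2*L+1) * (L * s^2))"
    using L s by (simp add: power2_eq_square)
  also have "\<dots> = j / ((2*L+1) * (L+j)) * s"
    using s2 L by simp
  also have "\<dots> = j / (2*L+1) * (s / (L+j))"
    by simp
  also have "\<dots> \<le> 1 / (2*\<epsilon>) * (s / (L+j))"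
  proof (rule mult_right_mono)
    show "j / (2*L+1) \<le> 1 / (2*\<epsilon>)"
      using small L \<epsilon> by (simp add: field_simps)
  qed (use L s in simp)
  also have "\<dots> = s / (\<epsilon> * (2*(L+j)))"
    by simp
  finally show ?thesis by (simp add: s_def)
qed

lemma even_cycle_count_ratio:
  "real (\<Prod>{2*L+1..2*L+2*j}) * even_cycle_count (2*L) / even_cycle_count (2*L+2*j)
     = wallis_ratio (real L) j"
proof (induction j)
  case 0
  then show ?case by (simp add: wallis_ratio_def even_cycle_count_pos)
next
  case (Suc j)
  let ?a = "2*L+2*j"
  define P where "P = real (\<Prod>{2*L+1..?a})"
  define e where "e = real (even_cycle_count ?a)"
  define b where "b = real ?a + 1"
  have prod: "real (\<Prod>{2*L+1..2*L+2*Suc j}) = P * b * (b+1)"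
    by (simp add: prod.cl_ivl_Suc P_def b_def algebra_simps)
  have count: "real (even_cycle_count (2*L+2*Suc j)) = b^2 * e"
    by (simp add: numeral_2_eq_2 e_def b_def power2_eq_square algebra_simps)
  have "e > 0" "b > 0" by (simp_all add: e_def b_def even_cycle_count_pos)
  then have "P * b * (b+1) * even_cycle_count (2*L) / (b^2 * e)
      = P * even_cycle_count (2*L) / e * ((b+1) / b)"
    by (simp add: field_simps power2_eq_square)
  also have "\<dots> = wallis_ratio (real L) (Suc j)"
    using Suc.IH by (simp add: P_def e_def b_def wallis_ratio_Suc algebra_simps)
  finally show ?case by (simp only: prod count)
qed

lemma E_even_Y_eq_wallis_ratio:
  "j > 0 \<Longrightarrow> E_even (2*L+2*j) (\<lambda>p. real (Y (2*L+2*j) (2*j) p)) = wallis_ratio (real L) j"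
  using E_even_Y[of "2*j" "2*L+2*j"] even_cycle_count_ratio[of L j] by simp

theorem proposition3p4:
  fixes \<epsilon> :: real
  assumes "0 < \<epsilon>" and "\<epsilon> < 1"
  shows "\<exists>C N. \<forall>n k. N \<le> n \<and> even n \<and> even k \<and> 0 < real k / real n
            \<and> real k / real n < 1 - \<epsilon> \<longrightarrow>
           \<bar>E_even n (\<lambda>p. real (Y n k p)) - (1 - real k / real n) powr (-1/2)\<bar>
             \<le> C * (1 - real k / real n) powr (-1/2) / real n"
proof (intro exI[of _ "1/\<epsilon>"] exI[of _ 0] allI impI)
  fix n k :: nat
  assume H: "0 \<le> n \<and> even n \<and> even k \<and> 0 < real k / real n \<and> real k / real n < 1 - \<epsilon>"
  then have "0 < real k / real n" "real k / real n < 1"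
    using assms by linarith+
  then have "0 < k" "k < n"
    by (auto simp: zero_less_divide_iff divide_less_eq split: if_splits)
  obtain j m where k: "k = 2*j" and m: "n = 2*m" using H by (auto elim!: evenE)
  define L where "L = m - j"
  have n: "n = 2*L + 2*j" and L: "L > 0"
    using k m \<open>k < n\<close> by (auto simp: L_def)
  have kn: "real k / real n = real j / (real L + real j)"
    using L by (simp add: k n field_simps)
  have E: "E_even n (\<lambda>p. real (Y n k p)) = wallis_ratio (real L) j"
    using E_even_Y_eq_wallis_ratio[of j L] \<open>0 < k\<close> by (simp add: k n)
  have s: "(1 - real k / real n) powr (-1/2) = sqrt ((real L + real j) / real L)"
    using L by (simp add: kn field_simps powr_minus_divide powr_half_sqrt real_sqrt_divide)
  have "real j < (1 - \<epsilon>) * (real L + real j)"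
    using H L by (simp add: kn divide_less_eq)
  moreover have "0 \<le> \<epsilon> * real L" using assms by simp
  ultimately have "\<epsilon> * real j \<le> real L" by (simp add: algebra_simps)
  then have "\<bar>wallis_ratio (real L) j - sqrt ((real L + real j) / real L)\<bar>
      \<le> 1/\<epsilon> * sqrt ((real L + real j) / real L) / real n"
    using wallis_ratio_approx[of "real L" \<epsilon> j] assms(1) L by (simp add: n)
  then show "\<bar>E_even n (\<lambda>p. real (Y n k p)) - (1 - real k / real n) powr (-1/2)\<bar>
      \<le> 1/\<epsilon> * (1 - real k / real n) powr (-1/2) / real n"
    by (simp only: E s)
qed

end
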